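(* For all integers $m\ge 0$ and $s\ge 0$, every $(m,s)$-semibipartite directed graph is not $(m+2)$-solvable.
   Context: A directed graph $D=(V,E)$ has arcs $E \subseteq \{(u,v)\in V^2 : u \neq v\}$ (bidirectional pairs allowed; an undirected graph is identified with the directed graph having both arcs for each edge). $N^-(v)=\{u:(u,v)\in E\}$. For $q\ge2$ let $[q]=\{0,\dots,q-1\}$. A $D$-function over $[q]$ is a map $f=(f_v)_{v\in V}:[q]^V\to[q]^V$ with each $f_v(x)$ depending only on $(x_u)_{u\in N^-(v)}$. $D$ is $q$-solvable if some $D$-function $f$ over $[q]$ has the property that for every $x\in[q]^V$ there is $v$ with $f_v(x)=x_v$. A directed graph $D$ is $(m,s)$-semibipartite if its vertex set can be partitioned as $V=L\cup R$ with $|L|=m$, $|R|=s$, the induced subgraph $D[L]$ has no arcs, and the induced subgraph $D[R]$ is acyclic (contains no directed cycle). *)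

theory Defs
  imports Main "HOL-Library.FuncSet"
begin

definition digraph :: "'v set \<Rightarrow> ('v \<times> 'v) set \<Rightarrow> bool" where
  "digraph V E \<longleftrightarrow> E \<subseteq> V \<times> V \<and> (\<forall>u v. (u, v) \<in> E \<longrightarrow> u \<noteq> v)"

definition in_nbrs :: "('v \<times> 'v) set \<Rightarrow> 'v \<Rightarrow> 'v set" where
  "in_nbrs E v = {u. (u, v) \<in> E}"

definition configs :: "'v set \<Rightarrow> nat \<Rightarrow> ('v \<Rightarrow> nat) set" where
  "configs V q = (V \<rightarrow>\<^sub>E {0..<q})"

definition is_D_function :: "'v set \<Rightarrow> ('v \<times> 'v) set \<Rightarrow> nat \<Rightarrow> ('v \<Rightarrow> ('v \<Rightarrow> nat) \<Rightarrow> nat) \<Rightarrow> bool" where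
  "is_D_function V E q f \<longleftrightarrow>
     (\<forall>v\<in>V. \<forall>x\<in>configs V q. f v x \<in> {0..<q}) \<and>
     (\<forall>v\<in>V. \<forall>x\<in>configs V q. \<forall>y\<in>configs V q.
        (\<forall>u\<in>in_nbrs E v. x u = y u) \<longrightarrow> f v x = f v y)"

definition q_solvable :: "'v set \<Rightarrow> ('v \<times> 'v) set \<Rightarrow> nat \<Rightarrow> bool" where
  "q_solvable V E q \<longleftrightarrow>
     (\<exists>f. is_D_function V E q f \<and> (\<forall>x\<in>configs V q. \<exists>v\<in>V. f v x = x v))"

definition semibipartite :: "nat \<Rightarrow> nat \<Rightarrow> 'v set \<Rightarrow> ('v \<times> 'v) set \<Rightarrow> bool" where
  "semibipartite m s V E \<longleftrightarrow>
     (\<exists>L R. L \<inter> R = {} \<and> L \<union> R = V \<and> finite L \<and> finite R \<and> card L = m \<and> card R = s \<and>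
        E \<inter> (L \<times> L) = {} \<and> acyclic (E \<inter> (R \<times> R)))"

end

theory Submission
  imports Defs
begin

text \<open>Look for a non-fixed configuration that is constant, say c, on L. If R is empty there
  are no arcs, so every local function is constant and one of the m + 1 values c \<le> m avoids all
  m of them. Otherwise let r be a source of D[R]; its in-neighbours lie in L, so on configurations
  constant c on L its local function takes at most m + 1 values as c ranges over 0..m. Fixing
  the value of r to one of the m + 2 symbols avoiding them all leaves a D-function on V - {r},
  to which induction applies.\<close>

lemma ex_le_notin_if_card_le:
  fixes K :: "nat set"
  assumes "finite K" "card K \<le> m"
  shows "\<exists>c\<le>m. c \<notin> K"
proof (rule ccontr)
  assume "\<not> ?thesis"
  then have "{0..m} \<subseteq> K" by auto
  then have "card {0..m} \<le> card K" using assms(1) by (rule card_mono[rotated])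
  then show False using assms(2) by simp
qed

lemma finite_acyclic_has_source:
  assumes "finite R" "R \<noteq> {}" "acyclic (E \<inter> R \<times> R)"
  obtains r where "r \<in> R" "\<And>u. u \<in> R \<Longrightarrow> (u, r) \<notin> E"
proof -
  have "wf (E \<inter> R \<times> R)"
    using assms(1,3) by (intro finite_acyclic_wf) auto
  then obtain r where "r \<in> R" "\<And>u. (u, r) \<in> E \<inter> R \<times> R \<Longrightarrow> u \<notin> R"
    using assms(2) wfE_min by (metis ex_in_conv)
  then show ?thesis
    using that by blast
qed

text \<open>Configurations are extensional, so they all agree outside V.\<close>
lemma is_D_function_cong:
  assumes "is_D_function V E q f" "v \<in> V" "x \<in> configs V q" "y \<in> configs V q"
    and "\<And>u. u \<in> in_nbrs E v \<Longrightarrow> u \<in> V \<Longrightarrow> x u = y u"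
  shows "f v x = f v y"
proof -
  have "x u = y u" if "u \<in> in_nbrs E v" for u
  proof (cases "u \<in> V")
    case False
    then show ?thesis
      using assms(3,4) unfolding configs_def by (metis PiE_arb)
  qed (use that assms(5) in blast)
  then show ?thesis
    using assms(1-4) unfolding is_D_function_def by blast
qed

lemma configs_fun_upd:
  assumes "x \<in> configs (V - {r}) q" "r \<in> V" "a < q"
  shows "x(r := a) \<in> configs V q"
  using PiE_fun_upd[of a "\<lambda>_. {0..<q}" r x "V - {r}"] assms
  unfolding configs_def by (simp add: insert_absorb)

lemma is_D_function_fix_vertex:
  assumes "is_D_function V E q f" "r \<in> V" "a < q"
  shows "is_D_function (V - {r}) E q (\<lambda>v x. f v (x(r := a)))"
  unfolding is_D_function_def
proof (intro conjI ballI impI)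
  fix v x assume "v \<in> V - {r}" "x \<in> configs (V - {r}) q"
  moreover have "x(r := a) \<in> configs V q"
    using configs_fun_upd[OF _ assms(2,3)] calculation(2) .
  ultimately show "f v (x(r := a)) \<in> {0..<q}"
    using assms(1) unfolding is_D_function_def by blast
next
  fix v x y
  assume v: "v \<in> V - {r}" and x: "x \<in> configs (V - {r}) q" and y: "y \<in> configs (V - {r}) q"
    and agree: "\<forall>u\<in>in_nbrs E v. x u = y u"
  show "f v (x(r := a)) = f v (y(r := a))"
  proof (rule is_D_function_cong[OF assms(1)])
    show "x(r := a) \<in> configs V q" "y(r := a) \<in> configs V q"
      using configs_fun_upd[OF _ assms(2,3)] x y by auto
    show "(x(r := a)) u = (y(r := a)) u" if "u \<in> in_nbrs E v" "u \<in> V" for u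
      using that agree by simp
  qed (use v in simp)
qed

lemma semibipartite_fixpoint_free_config:
  assumes "finite R" "finite L" "L \<inter> R = {}" "card L + 2 \<le> q"
    and "E \<inter> L \<times> L = {}" "acyclic (E \<inter> R \<times> R)"
    and "is_D_function (L \<union> R) E q f"
  shows "\<exists>c\<le>card L. \<exists>x\<in>configs (L \<union> R) q. (\<forall>l\<in>L. x l = c) \<and> (\<forall>v\<in>L \<union> R. f v x \<noteq> x v)"
  using assms(1,3,6,7)
proof (induction R arbitrary: f rule: finite_psubset_induct)
  case (psubset R)
  define cfg where "cfg c = restrict (\<lambda>v. if v \<in> L then c else 0) (L \<union> R)" for c :: nat
  have cfg: "cfg c \<in> configs (L \<union> R) q" if "c \<le> card L" for c
    unfolding cfg_def configs_def using that assms(4) by auto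
  show ?case
  proof (cases "R = {}")
    case True
    have const: "f l (cfg c) = f l (cfg 0)" if "l \<in> L" "c \<le> card L" for l c
      by (rule is_D_function_cong[OF psubset.prems(3)])
        (use that True assms(5) cfg in \<open>auto simp: in_nbrs_def\<close>)
    have "finite ((\<lambda>l. f l (cfg 0)) ` L)" "card ((\<lambda>l. f l (cfg 0)) ` L) \<le> card L"
      using assms(2) card_image_le by auto
    then obtain c where c: "c \<le> card L" "c \<notin> (\<lambda>l. f l (cfg 0)) ` L"
      using ex_le_notin_if_card_le by blast
    then have "\<forall>v\<in>L \<union> R. f v (cfg c) \<noteq> cfg c v"
      using True const unfolding cfg_def by auto
    moreover have "\<forall>l\<in>L. cfg c l = c"
      unfolding cfg_def by simp
    ultimately show ?thesis
      using c(1) cfg[OF c(1)] by blast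
  next
    case False
    obtain r where r: "r \<in> R" and source: "\<And>u. u \<in> R \<Longrightarrow> (u, r) \<notin> E"
      using finite_acyclic_has_source[OF psubset.hyps(1) False psubset.prems(2)] by blast
    define K where "K = (\<lambda>c. f r (cfg c)) ` {0..card L}"
    have "finite K" "card K \<le> card L + 1"
      unfolding K_def using card_image_le[of "{0..card L}"] by auto
    then obtain a where a: "a \<le> card L + 1" "a \<notin> K"
      using ex_le_notin_if_card_le by blast
    have V: "L \<union> R - {r} = L \<union> (R - {r})"
      using psubset.prems(1) r by auto
    have "\<exists>c\<le>card L. \<exists>x\<in>configs (L \<union> (R - {r})) q.
        (\<forall>l\<in>L. x l = c) \<and> (\<forall>v\<in>L \<union> (R - {r}). f v (x(r := a)) \<noteq> x v)"
    proof (rule psubset.IH)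
      show "is_D_function (L \<union> (R - {r})) E q (\<lambda>v x. f v (x(r := a)))"
        using is_D_function_fix_vertex[OF psubset.prems(3), of r a] r a(1) assms(4)
        unfolding V by (simp del: fun_upd_apply)
      show "acyclic (E \<inter> (R - {r}) \<times> (R - {r}))"
        by (rule acyclic_subset[OF psubset.prems(2)]) auto
    qed (use r psubset.prems(1) in auto)
    then obtain c x' where c: "c \<le> card L" and x': "x' \<in> configs (L \<union> (R - {r})) q"
      and x'L: "\<forall>l\<in>L. x' l = c" and nonfix': "\<forall>v\<in>L \<union> (R - {r}). f v (x'(r := a)) \<noteq> x' v"
      by blast
    define x where "x = x'(r := a)"
    have x: "x \<in> configs (L \<union> R) q"
      unfolding x_def using configs_fun_upd[of x' "L \<union> R" r q a] x' V r a(1) assms(4) by auto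
    have xL: "\<forall>l\<in>L. x l = c"
      using x'L r psubset.prems(1) unfolding x_def by auto
    \<comment> \<open>r only sees L, where x looks like cfg c\<close>
    have "f r x = f r (cfg c)"
    proof (rule is_D_function_cong[OF psubset.prems(3) _ x cfg[OF c]])
      show "x u = cfg c u" if "u \<in> in_nbrs E r" "u \<in> L \<union> R" for u
        using that xL source unfolding in_nbrs_def cfg_def by auto
    qed (use r in simp)
    then have "f r x \<noteq> x r"
      using a c unfolding K_def x_def by auto
    moreover have "\<forall>v\<in>L \<union> (R - {r}). f v x \<noteq> x v"
      using nonfix' r psubset.prems(1) unfolding x_def by auto
    ultimately have "\<forall>v\<in>L \<union> R. f v x \<noteq> x v"
      by blast
    then show ?thesis
      using c x xL by blast
  qed
qed

theorem theorem10:
  fixes V :: "'v set" and E :: "('v \<times> 'v) set" and m s :: nat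
  assumes "digraph V E"
    and "semibipartite m s V E"
  shows "\<not> q_solvable V E (m + 2)"
proof
  assume "q_solvable V E (m + 2)"
  then obtain f where f: "is_D_function V E (m + 2) f"
    and fixpoint: "\<forall>x\<in>configs V (m + 2). \<exists>v\<in>V. f v x = x v"
    unfolding q_solvable_def by blast
  obtain L R where "L \<inter> R = {}" "L \<union> R = V" "finite L" "finite R" "card L = m"
    "E \<inter> L \<times> L = {}" "acyclic (E \<inter> R \<times> R)"
    using assms(2) unfolding semibipartite_def by blast
  then obtain x where "x \<in> configs V (m + 2)" "\<forall>v\<in>V. f v x \<noteq> x v"
    using semibipartite_fixpoint_free_config[of R L "m + 2" E f] f by auto
  with fixpoint show False
    by blast
qed

end
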